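(* Let $\mathcal A\in\mathbb R^{n_1}\otimes\cdots\otimes\mathbb R^{n_k}$, $1\le s\le k$, $r\le\min\{n_1,\dots,n_s\}$, and consider the problem $\mathrm{mLRPOTA}(r)$. At every feasible point of this problem, the linear independence constraint qualification holds, i.e. the gradients of the constraint functions are linearly independent. In particular, at any local maximizer $U$ the KKT conditions hold and the set of Lagrange multipliers associated with $U$ is a singleton.
   Context: Problem $\mathrm{mLRPOTA}(r)$: maximize $\sum_{j=1}^r\big(((U^{(1)})^{\mathsf T},\dots,(U^{(k)})^{\mathsf T})\cdot\mathcal A\big)_{j\cdots j}^2=\sum_{j=1}^r\langle\mathcal A,\mathbf u^{(1)}_j\otimes\cdots\otimes\mathbf u^{(k)}_j\rangle^2$ over $U=(U^{(1)},\dots,U^{(k)})$, $U^{(i)}\in\mathbb R^{n_i\times r}$ with columns $\mathbf u^{(i)}_j$, subject to the equality constraints $(U^{(i)})^{\mathsf T}U^{(i)}=I_r$ for $i=1,\dots,s$ (the entries $(a,b)$, $a\le b$, of the symmetric matrix $(U^{(i)})^{\mathsf T}U^{(i)}-I_r$ being the constraint functions) and $((U^{(i)})^{\mathsf T}U^{(i)})_{jj}=1$ for $j=1,\dots,r$, $i=s+1,\dots,k$. *)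

theory Defs
  imports "HOL-Analysis.Analysis" "HOL-Library.FuncSet"
begin

text \<open>A point U = (U^(1),...,U^(k)) is encoded as a function U i a j = entry (a,j) of the
  n_i x r matrix U^(i), with 0-based indices i < k, a < n i, j < r.
  Entries outside this index range are irrelevant.\<close>

type_synonym point = "nat \<Rightarrow> nat \<Rightarrow> nat \<Rightarrow> real"

definition coords :: "nat \<Rightarrow> (nat \<Rightarrow> nat) \<Rightarrow> nat \<Rightarrow> (nat \<times> nat \<times> nat) set" where
  "coords k n r = {(i, a, j). i < k \<and> a < n i \<and> j < r}"

text \<open>Objective: sum_j <A, u^(1)_j (x) ... (x) u^(k)_j>^2; the tensor A is given by its entries
  A idx for multi-indices idx with idx i < n i (i < k).\<close>
definition objective :: "nat \<Rightarrow> (nat \<Rightarrow> nat) \<Rightarrow> nat \<Rightarrow> ((nat \<Rightarrow> nat) \<Rightarrow> real) \<Rightarrow> point \<Rightarrow> real" where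
  "objective k n r A U =
     (\<Sum>j<r. (\<Sum>idx\<in>(\<Pi>\<^sub>E i\<in>{..<k}. {..<n i}). A idx * (\<Prod>i<k. U i (idx i) j))^2)"

text \<open>Constraint index set: (i,a,b) with a \<le> b < r; for i < s all such pairs (entries of the
  symmetric matrix (U^(i))^T U^(i) - I_r), for s \<le> i < k only the diagonal a = b.\<close>
definition constraints :: "nat \<Rightarrow> nat \<Rightarrow> nat \<Rightarrow> (nat \<times> nat \<times> nat) set" where
  "constraints k s r = {(i, a, b). i < k \<and> a \<le> b \<and> b < r \<and> (i < s \<or> a = b)}"

definition constraint_fun :: "(nat \<Rightarrow> nat) \<Rightarrow> nat \<times> nat \<times> nat \<Rightarrow> point \<Rightarrow> real" where
  "constraint_fun n c U = (case c of (i, a, b) \<Rightarrow>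
     (\<Sum>p<n i. U i p a * U i p b) - (if a = b then 1 else 0))"

definition feasible :: "nat \<Rightarrow> nat \<Rightarrow> (nat \<Rightarrow> nat) \<Rightarrow> nat \<Rightarrow> point \<Rightarrow> bool" where
  "feasible k s n r U \<longleftrightarrow> (\<forall>c\<in>constraints k s r. constraint_fun n c U = 0)"

definition entry :: "point \<Rightarrow> nat \<times> nat \<times> nat \<Rightarrow> real" where
  "entry U x = (case x of (i, a, j) \<Rightarrow> U i a j)"

definition perturb :: "point \<Rightarrow> nat \<times> nat \<times> nat \<Rightarrow> real \<Rightarrow> point" where
  "perturb U x t = (\<lambda>i a j. if (i, a, j) = x then U i a j + t else U i a j)"

definition partial :: "(point \<Rightarrow> real) \<Rightarrow> point \<Rightarrow> nat \<times> nat \<times> nat \<Rightarrow> real" where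
  "partial g U x = deriv (\<lambda>t. g (perturb U x t)) 0"

definition LICQ :: "nat \<Rightarrow> nat \<Rightarrow> (nat \<Rightarrow> nat) \<Rightarrow> nat \<Rightarrow> point \<Rightarrow> bool" where
  "LICQ k s n r U \<longleftrightarrow>
     (\<forall>\<mu>. (\<forall>x\<in>coords k n r.
              (\<Sum>c\<in>constraints k s r. \<mu> c * partial (constraint_fun n c) U x) = 0)
          \<longrightarrow> (\<forall>c\<in>constraints k s r. \<mu> c = 0))"

definition local_maximizer ::
  "nat \<Rightarrow> nat \<Rightarrow> (nat \<Rightarrow> nat) \<Rightarrow> nat \<Rightarrow> ((nat \<Rightarrow> nat) \<Rightarrow> real) \<Rightarrow> point \<Rightarrow> bool" where
  "local_maximizer k s n r A U \<longleftrightarrow> feasible k s n r U \<and>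
     (\<exists>\<epsilon>>0. \<forall>V. feasible k s n r V \<and> (\<Sum>x\<in>coords k n r. (entry V x - entry U x)^2) < \<epsilon>^2
        \<longrightarrow> objective k n r A V \<le> objective k n r A U)"

text \<open>The KKT conditions hold at U iff this set is nonempty (and U is feasible).\<close>
definition lagrange_multipliers ::
  "nat \<Rightarrow> nat \<Rightarrow> (nat \<Rightarrow> nat) \<Rightarrow> nat \<Rightarrow> ((nat \<Rightarrow> nat) \<Rightarrow> real) \<Rightarrow> point
     \<Rightarrow> (nat \<times> nat \<times> nat \<Rightarrow> real) set" where
  "lagrange_multipliers k s n r A U =
     {l. l \<in> constraints k s r \<rightarrow>\<^sub>E UNIV \<and>
        (\<forall>x\<in>coords k n r. partial (objective k n r A) U x =
           (\<Sum>c\<in>constraints k s r. l c * partial (constraint_fun n c) U x))}"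

end

theory Submission
  imports Defs
begin

(* At a feasible point, the constraints on block i say exactly that the columns u_b of U^(i)
   coupled to a column u_j (all columns if i < s, only u_j itself otherwise) are orthonormal.
   The gradient of sum_c mu_c g_c with respect to u_j is sum_b M_jb u_b, with M the symmetric
   matrix of multipliers (diagonal doubled); pairing with the orthonormal u_b recovers M_jb, so
   a vanishing combination forces mu = 0.  This is LICQ, and it makes multipliers unique.
   For existence, differentiate the objective at a local maximizer along feasible curves that
   rotate one column u_a towards a unit vector orthogonal to its coupled columns, or rotate two
   columns of an orthonormal block into each other.  The first shows that every gradient column
   lies in the span of its coupled columns, the second that the matrix (<grad_a f, u_b>)_ab is
   symmetric on the orthonormal blocks; its entries are then multipliers. *)

lemma orthonormal_coefficient:
  fixes u :: "'b \<Rightarrow> nat \<Rightarrow> real"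
  assumes "finite B" "b0 \<in> B"
    and orthonormal: "\<And>a b. a \<in> B \<Longrightarrow> b \<in> B \<Longrightarrow> (\<Sum>p<N. u a p * u b p) = (if a = b then 1 else 0)"
  shows "(\<Sum>p<N. (\<Sum>b\<in>B. c b * u b p) * u b0 p) = c b0"
proof -
  have "(\<Sum>p<N. (\<Sum>b\<in>B. c b * u b p) * u b0 p) = (\<Sum>b\<in>B. c b * (\<Sum>p<N. u b p * u b0 p))"
    by (simp add: sum_distrib_left sum_distrib_right mult.assoc sum.swap[of _ "{..<N}"])
  also have "\<dots> = (\<Sum>b\<in>B. if b = b0 then c b else 0)"
    using \<open>b0 \<in> B\<close> by (intro sum.cong) (auto simp: orthonormal)
  also have "\<dots> = c b0"
    using assms(1,2) by simp
  finally show ?thesis .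
qed

lemma orthonormal_expansion:
  fixes u :: "'b \<Rightarrow> nat \<Rightarrow> real"
  assumes "finite B"
    and orthonormal: "\<And>a b. a \<in> B \<Longrightarrow> b \<in> B \<Longrightarrow> (\<Sum>p<N. u a p * u b p) = (if a = b then 1 else 0)"
    and perp: "\<And>w. (\<Sum>p<N. w p * w p) = 1 \<Longrightarrow> (\<And>b. b \<in> B \<Longrightarrow> (\<Sum>p<N. w p * u b p) = 0)
                 \<Longrightarrow> (\<Sum>p<N. g p * w p) = 0"
    and "p0 < N"
  shows "g p0 = (\<Sum>b\<in>B. (\<Sum>p<N. g p * u b p) * u b p0)"
proof -
  define v where "v p = g p - (\<Sum>b\<in>B. (\<Sum>q<N. g q * u b q) * u b p)" for p
  have v_perp: "(\<Sum>p<N. v p * u b p) = 0" if "b \<in> B" for b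
    using orthonormal_coefficient[OF \<open>finite B\<close> that orthonormal]
    by (simp add: v_def left_diff_distrib sum_subtractf)
  have "v p * v p = g p * v p - (\<Sum>b\<in>B. (\<Sum>q<N. g q * u b q) * (v p * u b p))" for p
    by (simp add: v_def[of p] left_diff_distrib sum_distrib_left sum_distrib_right mult_ac)
  then have "(\<Sum>p<N. v p * v p)
      = (\<Sum>p<N. g p * v p) - (\<Sum>b\<in>B. (\<Sum>q<N. g q * u b q) * (\<Sum>p<N. v p * u b p))"
    by (simp add: sum_subtractf sum_distrib_left sum.swap[of _ "{..<N}"])
  then have vv: "(\<Sum>p<N. v p * v p) = (\<Sum>p<N. g p * v p)"
    by (simp add: v_perp)
  have "(\<Sum>p<N. v p * v p) = 0"
  proof (rule ccontr)
    define S where "S = (\<Sum>p<N. v p * v p)"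
    assume "S \<noteq> 0"
    moreover have "S \<ge> 0" unfolding S_def by (intro sum_nonneg) simp
    ultimately have "S > 0" by simp
    have "(\<Sum>p<N. g p * (v p / sqrt S)) = 0"
    proof (rule perp)
      show "(\<Sum>p<N. v p / sqrt S * (v p / sqrt S)) = 1"
        using \<open>S > 0\<close> by (simp add: S_def sum_divide_distrib[symmetric])
      show "(\<Sum>p<N. v p / sqrt S * u b p) = 0" if "b \<in> B" for b
        using v_perp[OF that] by (simp add: sum_divide_distrib[symmetric])
    qed
    then have "S = 0"
      using vv \<open>S > 0\<close> by (simp add: S_def sum_divide_distrib[symmetric])
    with \<open>S \<noteq> 0\<close> show False ..
  qed
  then have "v p0 * v p0 = 0"
    using \<open>p0 < N\<close> by (simp add: sum_nonneg_eq_0_iff)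
  then show ?thesis by (simp add: v_def)
qed

definition coupled_columns :: "nat \<Rightarrow> nat \<Rightarrow> nat \<Rightarrow> nat \<Rightarrow> nat set" where
  "coupled_columns s r i j = {b. b < r \<and> (i < s \<or> b = j)}"

lemma finite_coupled_columns: "finite (coupled_columns s r i j)"
  unfolding coupled_columns_def by simp

lemma feasible_orthonormal:
  assumes "feasible k s n r U" "i < k" "a \<in> coupled_columns s r i j" "b \<in> coupled_columns s r i j"
  shows "(\<Sum>p<n i. U i p a * U i p b) = (if a = b then 1 else 0)"
proof -
  have "(i, min a b, max a b) \<in> constraints k s r"
    using assms(2-4) by (auto simp: coupled_columns_def constraints_def)
  then have "(\<Sum>p<n i. U i p (min a b) * U i p (max a b)) = (if a = b then 1 else 0)"
    using assms(1) by (force simp: feasible_def constraint_fun_def)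
  then show ?thesis
    by (cases "a \<le> b") (simp_all add: min_def max_def mult.commute)
qed

definition multiplier_matrix :: "(nat \<times> nat \<times> nat \<Rightarrow> real) \<Rightarrow> nat \<Rightarrow> nat \<Rightarrow> nat \<Rightarrow> real" where
  "multiplier_matrix \<mu> i a b = (if a = b then 2 * \<mu> (i, a, a) else \<mu> (i, min a b, max a b))"

lemma perturb_apply: "perturb U x t i a j = U i a j + t * (if (i, a, j) = x then 1 else 0)"
  by (simp add: perturb_def)

lemma partial_constraint_fun:
  assumes "p < n i'"
  shows "partial (constraint_fun n (i, a, b)) U (i', p, j) =
    (if i' = i then (if j = a then U i p b else 0) + (if j = b then U i p a else 0) else 0)"
proof -
  let ?e = "\<lambda>q c. if (i, q, c) = (i', p, j) then 1 else 0 :: real"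
  have "((\<lambda>t. constraint_fun n (i, a, b) (perturb U (i', p, j) t)) has_real_derivative
     (\<Sum>q<n i. ?e q a * U i q b + ?e q b * U i q a)) (at 0)"
    unfolding constraint_fun_def perturb_apply prod.case
    by (auto intro!: derivative_eq_intros sum.cong)
  then have "partial (constraint_fun n (i, a, b)) U (i', p, j) =
      (\<Sum>q<n i. ?e q a * U i q b + ?e q b * U i q a)"
    unfolding partial_def by (simp add: DERIV_imp_deriv)
  also have "\<dots> = (\<Sum>q<n i. if q = p then
      (if i' = i \<and> j = a then U i p b else 0) + (if i' = i \<and> j = b then U i p a else 0) else 0)"
    by (intro sum.cong) auto
  also have "\<dots> = (if i' = i then (if j = a then U i p b else 0) + (if j = b then U i p a else 0) else 0)"
    using assms by auto
  finally show ?thesis .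
qed

lemma constraint_gradient_combination:
  assumes "i < k" "p < n i" "j < r"
  shows "(\<Sum>c\<in>constraints k s r. \<mu> c * partial (constraint_fun n c) U (i, p, j)) =
    (\<Sum>b\<in>coupled_columns s r i j. multiplier_matrix \<mu> i j b * U i p b)"
proof -
  let ?C = "constraints k s r" and ?B = "coupled_columns s r i j"
  let ?key = "\<lambda>b. (i, min j b, max j b)" and ?wt = "\<lambda>b. if b = j then 2 else 1 :: real"
  have "finite ?C"
    by (rule finite_subset[of _ "{..<k} \<times> {..<r} \<times> {..<r}"]) (auto simp: constraints_def)
  \<comment> \<open>Reindex by b \<mapsto> (i, min j b, max j b): the diagonal constraint (i, j, j) is hit once
     but its gradient contains column j twice.\<close>
  have "(\<Sum>b\<in>?B. multiplier_matrix \<mu> i j b * U i p b)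
      = (\<Sum>b\<in>?B. \<Sum>c\<in>?C. if c = ?key b then ?wt b * \<mu> c * U i p b else 0)"
  proof (intro sum.cong refl)
    fix b assume "b \<in> ?B"
    then have "?key b \<in> ?C"
      using assms by (auto simp: coupled_columns_def constraints_def)
    then show "multiplier_matrix \<mu> i j b * U i p b
        = (\<Sum>c\<in>?C. if c = ?key b then ?wt b * \<mu> c * U i p b else 0)"
      using \<open>finite ?C\<close> by (simp add: multiplier_matrix_def sum.delta')
  qed
  also have "\<dots> = (\<Sum>c\<in>?C. \<Sum>b\<in>?B. if c = ?key b then ?wt b * \<mu> c * U i p b else 0)"
    by (rule sum.swap)
  also have "\<dots> = (\<Sum>c\<in>?C. \<mu> c * partial (constraint_fun n c) U (i, p, j))"
  proof (intro sum.cong refl)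
    fix c assume "c \<in> ?C"
    then obtain i' a b where c: "c = (i', a, b)" "a \<le> b" "b < r" "i' < s \<or> a = b"
      unfolding constraints_def by blast
    have "{b'\<in>?B. c = ?key b'} = (if i' \<noteq> i then {} else if a = j then {b} else if b = j then {a} else {})"
      using c by (auto simp: coupled_columns_def min_def max_def)
    then show "(\<Sum>b'\<in>?B. if c = ?key b' then ?wt b' * \<mu> c * U i p b' else 0)
        = \<mu> c * partial (constraint_fun n c) U (i, p, j)"
      using c assms(2) finite_coupled_columns[of s r i j]
      by (simp add: partial_constraint_fun sum.inter_filter[symmetric] split: if_splits)
  qed
  finally show ?thesis ..
qed

lemma feasible_imp_LICQ:
  assumes feasible: "feasible k s n r U"
  shows "LICQ k s n r U"
  unfolding LICQ_def
proof (intro allI impI ballI)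
  fix \<mu> c
  assume grad: "\<forall>x\<in>coords k n r. (\<Sum>c\<in>constraints k s r. \<mu> c * partial (constraint_fun n c) U x) = 0"
    and "c \<in> constraints k s r"
  then obtain i a b where c: "c = (i, a, b)" "i < k" "a \<le> b" "b < r" "i < s \<or> a = b"
    unfolding constraints_def by blast
  let ?B = "coupled_columns s r i a"
  have "a \<in> ?B" "b \<in> ?B"
    using c by (auto simp: coupled_columns_def)
  have "multiplier_matrix \<mu> i a b
      = (\<Sum>p<n i. (\<Sum>b'\<in>?B. multiplier_matrix \<mu> i a b' * U i p b') * U i p b)"
    using finite_coupled_columns \<open>b \<in> ?B\<close> feasible_orthonormal[OF feasible \<open>i < k\<close>]
    by (rule orthonormal_coefficient[symmetric])
  also have "\<dots> = 0"
    using grad c \<open>a \<in> ?B\<close> by (simp add: coords_def coupled_columns_def constraint_gradient_combination)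
  finally show "\<mu> c = 0"
    using c by (simp add: multiplier_matrix_def split: if_splits)
qed

lemma objective_cong:
  assumes "\<And>i a j. (i, a, j) \<in> coords k n r \<Longrightarrow> V i a j = U i a j"
  shows "objective k n r A V = objective k n r A U"
  unfolding objective_def
  using assms by (intro sum.cong refl arg_cong[where f = "\<lambda>x. x^2"] prod.cong)
    (auto simp: coords_def PiE_def Pi_def)

(* Entry p of A contracted with the columns u_j of all blocks other than i0: the inner product
   <A, u_j^(1) (x) ... (x) u_j^(k)> is linear in u_j^(i0) with this coefficient vector. *)
definition contraction_except ::
  "nat \<Rightarrow> (nat \<Rightarrow> nat) \<Rightarrow> ((nat \<Rightarrow> nat) \<Rightarrow> real) \<Rightarrow> point \<Rightarrow> nat \<Rightarrow> nat \<Rightarrow> nat \<Rightarrow> real" where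
  "contraction_except k n A U i0 j p = (\<Sum>idx\<in>(\<Pi>\<^sub>E i\<in>{..<k}. {..<n i}).
      if idx i0 = p then A idx * (\<Prod>i\<in>{..<k} - {i0}. U i (idx i) j) else 0)"

lemma objective_block_form:
  assumes "i0 < k"
    and agree: "\<And>i a j. i < k \<Longrightarrow> i \<noteq> i0 \<Longrightarrow> a < n i \<Longrightarrow> j < r \<Longrightarrow> V i a j = U i a j"
  shows "objective k n r A V = (\<Sum>j<r. (\<Sum>p<n i0. V i0 p j * contraction_except k n A U i0 j p)^2)"
proof -
  let ?S = "\<Pi>\<^sub>E i\<in>{..<k}. {..<n i}"
  have "(\<Sum>idx\<in>?S. A idx * (\<Prod>i<k. V i (idx i) j))
      = (\<Sum>p<n i0. V i0 p j * contraction_except k n A U i0 j p)" if "j < r" for j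
  proof -
    let ?f = "\<lambda>idx. V i0 (idx i0) j * A idx * (\<Prod>i\<in>{..<k} - {i0}. U i (idx i) j)"
    have "(\<Sum>p<n i0. V i0 p j * contraction_except k n A U i0 j p)
        = (\<Sum>p<n i0. \<Sum>idx\<in>{idx \<in> ?S. idx i0 = p}. ?f idx)"
    proof (intro sum.cong refl)
      fix p
      have "V i0 p j * contraction_except k n A U i0 j p = (\<Sum>idx\<in>?S. if idx i0 = p then ?f idx else 0)"
        unfolding contraction_except_def sum_distrib_left by (intro sum.cong) auto
      then show "V i0 p j * contraction_except k n A U i0 j p = sum ?f {idx \<in> ?S. idx i0 = p}"
        by (simp add: sum.inter_filter finite_PiE cong: if_cong)
    qed
    also have "\<dots> = sum ?f ?S"
      using assms(1) by (intro sum.group) (auto simp: finite_PiE)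
    also have "\<dots> = (\<Sum>idx\<in>?S. A idx * (\<Prod>i<k. V i (idx i) j))"
    proof (intro sum.cong refl)
      fix idx assume idx: "idx \<in> ?S"
      have "(\<Prod>i<k. V i (idx i) j) = V i0 (idx i0) j * (\<Prod>i\<in>{..<k} - {i0}. V i (idx i) j)"
        using assms(1) by (subst prod.remove[of _ i0]) auto
      also have "(\<Prod>i\<in>{..<k} - {i0}. V i (idx i) j) = (\<Prod>i\<in>{..<k} - {i0}. U i (idx i) j)"
        using idx that by (intro prod.cong refl agree) (auto simp: PiE_def Pi_def)
      finally show "?f idx = A idx * (\<Prod>i<k. V i (idx i) j)"
        by simp
    qed
    finally show ?thesis ..
  qed
  then show ?thesis
    unfolding objective_def by (intro sum.cong) auto
qed

lemma sum_squared_linear_forms_has_derivative: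
  assumes "\<And>p j. p < N \<Longrightarrow> j < r \<Longrightarrow> ((\<lambda>t. x t p j) has_real_derivative d p j) (at t0)"
  shows "((\<lambda>t. \<Sum>j<r. (\<Sum>p<N. x t p j * c j p)^2) has_real_derivative
     (\<Sum>j<r. \<Sum>p<N. 2 * (\<Sum>q<N. x t0 q j * c j q) * c j p * d p j)) (at t0)"
proof -
  have "((\<lambda>t. \<Sum>j<r. (\<Sum>p<N. x t p j * c j p)^2) has_real_derivative
      (\<Sum>j<r. of_nat 2 * ((\<Sum>p<N. d p j * c j p) * (\<Sum>p<N. x t0 p j * c j p) ^ (2 - Suc 0)))) (at t0)"
    using assms by (intro DERIV_sum DERIV_power DERIV_cmult_right) auto
  moreover have "(\<Sum>j<r. of_nat 2 * ((\<Sum>p<N. d p j * c j p) * (\<Sum>p<N. x t0 p j * c j p) ^ (2 - Suc 0)))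
      = (\<Sum>j<r. \<Sum>p<N. 2 * (\<Sum>q<N. x t0 q j * c j q) * c j p * d p j)"
    by (intro sum.cong refl)
      (simp add: sum_distrib_left sum_distrib_right mult_ac, subst sum.swap, simp add: mult_ac)
  ultimately show ?thesis by simp
qed

lemma objective_block_curve_has_derivative:
  assumes "i0 < k"
    and agree: "\<And>t i a j. i < k \<Longrightarrow> i \<noteq> i0 \<Longrightarrow> a < n i \<Longrightarrow> j < r \<Longrightarrow> \<gamma> t i a j = U i a j"
    and init: "\<And>p j. p < n i0 \<Longrightarrow> j < r \<Longrightarrow> \<gamma> 0 i0 p j = U i0 p j"
    and deriv: "\<And>p j. p < n i0 \<Longrightarrow> j < r \<Longrightarrow> ((\<lambda>t. \<gamma> t i0 p j) has_real_derivative d p j) (at 0)"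
  shows "((\<lambda>t. objective k n r A (\<gamma> t)) has_real_derivative
     (\<Sum>j<r. \<Sum>p<n i0. 2 * (\<Sum>q<n i0. U i0 q j * contraction_except k n A U i0 j q)
        * contraction_except k n A U i0 j p * d p j)) (at 0)"
proof -
  let ?C = "contraction_except k n A U i0"
  have "(\<lambda>t. objective k n r A (\<gamma> t)) = (\<lambda>t. \<Sum>j<r. (\<Sum>p<n i0. \<gamma> t i0 p j * ?C j p)^2)"
    using objective_block_form[OF \<open>i0 < k\<close>] agree by blast
  moreover have "((\<lambda>t. \<Sum>j<r. (\<Sum>p<n i0. \<gamma> t i0 p j * ?C j p)^2) has_real_derivative
      (\<Sum>j<r. \<Sum>p<n i0. 2 * (\<Sum>q<n i0. \<gamma> 0 i0 q j * ?C j q) * ?C j p * d p j)) (at 0)"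
    by (rule sum_squared_linear_forms_has_derivative) (rule deriv)
  ultimately show ?thesis
    using init by simp
qed

lemma partial_objective:
  assumes "i0 < k" "p0 < n i0" "j0 < r"
  shows "partial (objective k n r A) U (i0, p0, j0) =
     2 * (\<Sum>q<n i0. U i0 q j0 * contraction_except k n A U i0 j0 q) * contraction_except k n A U i0 j0 p0"
proof -
  let ?C = "contraction_except k n A U i0"
  have "((\<lambda>t. objective k n r A (perturb U (i0, p0, j0) t)) has_real_derivative
      (\<Sum>j<r. \<Sum>p<n i0. 2 * (\<Sum>q<n i0. U i0 q j * ?C j q) * ?C j p * (if (p, j) = (p0, j0) then 1 else 0)))
      (at 0)"
    using assms(1) by (rule objective_block_curve_has_derivative)
      (auto simp: perturb_apply intro!: derivative_eq_intros)
  then have "partial (objective k n r A) U (i0, p0, j0) =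
      (\<Sum>j<r. \<Sum>p<n i0. if (p, j) = (p0, j0) then 2 * (\<Sum>q<n i0. U i0 q j * ?C j q) * ?C j p else 0)"
    unfolding partial_def by (auto dest!: DERIV_imp_deriv intro!: sum.cong)
  also have "\<dots> = (\<Sum>j<r. if j = j0 then
      (\<Sum>p<n i0. if p = p0 then 2 * (\<Sum>q<n i0. U i0 q j * ?C j q) * ?C j p else 0) else 0)"
    by (intro sum.cong refl) auto
  also have "\<dots> = 2 * (\<Sum>q<n i0. U i0 q j0 * ?C j0 q) * ?C j0 p0"
    using assms(2,3) by simp
  finally show ?thesis .
qed

lemma objective_block_curve_chain_rule:
  assumes "i0 < k"
    and agree: "\<And>t i a j. i < k \<Longrightarrow> i \<noteq> i0 \<Longrightarrow> a < n i \<Longrightarrow> j < r \<Longrightarrow> \<gamma> t i a j = U i a j"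
    and init: "\<And>p j. p < n i0 \<Longrightarrow> j < r \<Longrightarrow> \<gamma> 0 i0 p j = U i0 p j"
    and deriv: "\<And>p j. p < n i0 \<Longrightarrow> j < r \<Longrightarrow> ((\<lambda>t. \<gamma> t i0 p j) has_real_derivative d p j) (at 0)"
  shows "((\<lambda>t. objective k n r A (\<gamma> t)) has_real_derivative
     (\<Sum>j<r. \<Sum>p<n i0. partial (objective k n r A) U (i0, p, j) * d p j)) (at 0)"
proof -
  have "((\<lambda>t. objective k n r A (\<gamma> t)) has_real_derivative
     (\<Sum>j<r. \<Sum>p<n i0. 2 * (\<Sum>q<n i0. U i0 q j * contraction_except k n A U i0 j q)
        * contraction_except k n A U i0 j p * d p j)) (at 0)"
    using assms by (rule objective_block_curve_has_derivative)
  then show ?thesis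
    using \<open>i0 < k\<close> by (simp add: partial_objective)
qed

lemma has_real_derivative_local_max:
  assumes "(f has_real_derivative D) (at x)" "eventually (\<lambda>y. f y \<le> f x) (at x)"
  shows "D = 0"
  using has_derivative_local_max[OF assms(1)[unfolded has_field_derivative_def] assms(2)]
  by (metis mult.right_neutral)

lemma local_maximizer_block_curve_derivative_zero:
  assumes max: "local_maximizer k s n r A U" and "i0 < k"
    and feasible: "\<And>t. feasible k s n r (\<gamma> t)"
    and agree: "\<And>t i a j. i < k \<Longrightarrow> i \<noteq> i0 \<Longrightarrow> a < n i \<Longrightarrow> j < r \<Longrightarrow> \<gamma> t i a j = U i a j"
    and init: "\<And>p j. p < n i0 \<Longrightarrow> j < r \<Longrightarrow> \<gamma> 0 i0 p j = U i0 p j"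
    and deriv: "\<And>p j. p < n i0 \<Longrightarrow> j < r \<Longrightarrow> ((\<lambda>t. \<gamma> t i0 p j) has_real_derivative d p j) (at 0)"
  shows "(\<Sum>j<r. \<Sum>p<n i0. partial (objective k n r A) U (i0, p, j) * d p j) = 0"
proof (rule has_real_derivative_local_max)
  show "((\<lambda>t. objective k n r A (\<gamma> t)) has_real_derivative
      (\<Sum>j<r. \<Sum>p<n i0. partial (objective k n r A) U (i0, p, j) * d p j)) (at 0)"
    using assms(2) agree init deriv by (rule objective_block_curve_chain_rule)
  obtain \<epsilon> where "\<epsilon> > 0" and \<epsilon>: "\<And>V. feasible k s n r V \<Longrightarrow>
      (\<Sum>x\<in>coords k n r. (entry V x - entry U x)^2) < \<epsilon>^2 \<Longrightarrow> objective k n r A V \<le> objective k n r A U"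
    using max unfolding local_maximizer_def by blast
  have "((\<lambda>t. entry (\<gamma> t) x) \<longlongrightarrow> entry U x) (at 0)" if x_coord: "x \<in> coords k n r" for x
  proof -
    obtain i a j where x: "x = (i, a, j)" "i < k" "a < n i" "j < r"
      using x_coord unfolding coords_def by blast
    show ?thesis
    proof (cases "i = i0")
      case True
      then have "isCont (\<lambda>t. \<gamma> t i0 a j) 0"
        using deriv x by (blast intro: DERIV_isCont)
      then show ?thesis
        using True x init by (simp add: entry_def isCont_def)
    qed (use x agree in \<open>simp add: entry_def\<close>)
  qed
  then have "((\<lambda>t. \<Sum>x\<in>coords k n r. (entry (\<gamma> t) x - entry U x)^2) \<longlongrightarrow>
      (\<Sum>x\<in>coords k n r. (entry U x - entry U x)^2)) (at 0)"
    by (intro tendsto_sum tendsto_intros)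
  then have "eventually (\<lambda>t. (\<Sum>x\<in>coords k n r. (entry (\<gamma> t) x - entry U x)^2) < \<epsilon>^2) (at 0)"
    using \<open>\<epsilon> > 0\<close> by (intro order_tendstoD(2)) auto
  moreover have "objective k n r A (\<gamma> 0) = objective k n r A U"
  proof (rule objective_cong)
    fix i a j assume "(i, a, j) \<in> coords k n r"
    then show "\<gamma> 0 i a j = U i a j"
      using agree init by (cases "i = i0") (auto simp: coords_def)
  qed
  ultimately show "eventually (\<lambda>t. objective k n r A (\<gamma> t) \<le> objective k n r A (\<gamma> 0)) (at 0)"
    by (auto elim!: eventually_mono intro: \<epsilon> feasible)
qed

lemma sum_linear_combination_mult:
  fixes x y z :: "nat \<Rightarrow> real"
  shows "(\<Sum>p\<in>P. (c * x p + d * y p) * z p) = c * (\<Sum>p\<in>P. x p * z p) + d * (\<Sum>p\<in>P. y p * z p)"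
    and "(\<Sum>p\<in>P. z p * (c * x p + d * y p)) = c * (\<Sum>p\<in>P. z p * x p) + d * (\<Sum>p\<in>P. z p * y p)"
    and "(\<Sum>p\<in>P. (c * x p - d * y p) * z p) = c * (\<Sum>p\<in>P. x p * z p) - d * (\<Sum>p\<in>P. y p * z p)"
    and "(\<Sum>p\<in>P. z p * (c * x p - d * y p)) = c * (\<Sum>p\<in>P. z p * x p) - d * (\<Sum>p\<in>P. z p * y p)"
  by (simp_all add: algebra_simps sum.distrib sum_subtractf sum_distrib_left)

definition rotate_column :: "point \<Rightarrow> nat \<Rightarrow> nat \<Rightarrow> (nat \<Rightarrow> real) \<Rightarrow> real \<Rightarrow> point" where
  "rotate_column U i0 a w t =
     (\<lambda>i p j. if i = i0 \<and> j = a then cos t * U i0 p a + sin t * w p else U i p j)"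

definition rotate_column_pair :: "point \<Rightarrow> nat \<Rightarrow> nat \<Rightarrow> nat \<Rightarrow> real \<Rightarrow> point" where
  "rotate_column_pair U i0 a b t =
     (\<lambda>i p j. if i = i0 \<and> j = a then cos t * U i0 p a + sin t * U i0 p b
       else if i = i0 \<and> j = b then cos t * U i0 p b - sin t * U i0 p a
       else U i p j)"

lemma feasible_change_block:
  assumes feasible: "feasible k s n r U"
    and other_blocks: "\<And>i. i \<noteq> i0 \<Longrightarrow> V i = U i"
    and block: "\<And>a b. (i0, a, b) \<in> constraints k s r \<Longrightarrow> constraint_fun n (i0, a, b) V = 0"
  shows "feasible k s n r V"
  unfolding feasible_def
proof
  fix c assume "c \<in> constraints k s r"
  moreover obtain i a b where "c = (i, a, b)"
    by (cases c) blast
  ultimately show "constraint_fun n c V = 0"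
    using feasible block other_blocks[of i] by (cases "i = i0") (auto simp: feasible_def constraint_fun_def)
qed

lemma feasible_rotate_column:
  assumes feasible: "feasible k s n r U" and "i0 < k" "a < r"
    and unit: "(\<Sum>p<n i0. w p * w p) = 1"
    and perp: "\<And>b. b \<in> coupled_columns s r i0 a \<Longrightarrow> (\<Sum>p<n i0. w p * U i0 p b) = 0"
  shows "feasible k s n r (rotate_column U i0 a w t)"
proof (rule feasible_change_block[OF feasible])
  show "rotate_column U i0 a w t i = U i" if "i \<noteq> i0" for i
    using that by (simp add: rotate_column_def fun_eq_iff)
  fix a' b' assume c: "(i0, a', b') \<in> constraints k s r"
  then have "a' \<in> coupled_columns s r i0 a'" "b' \<in> coupled_columns s r i0 a'"
    by (auto simp: constraints_def coupled_columns_def)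
  note orthonormal = feasible_orthonormal[OF feasible \<open>i0 < k\<close> this]
  have perp': "(\<Sum>p<n i0. U i0 p b * w p) = 0" if "b \<in> coupled_columns s r i0 a" for b
    using perp[OF that] by (simp add: mult.commute)
  show "constraint_fun n (i0, a', b') (rotate_column U i0 a w t) = 0"
    using c orthonormal \<open>a < r\<close>
    by (cases "a' = a"; cases "b' = a")
      (auto simp: constraints_def constraint_fun_def rotate_column_def sum_linear_combination_mult
        unit perp perp' coupled_columns_def)
qed

lemma feasible_rotate_column_pair:
  assumes feasible: "feasible k s n r U" and "i0 < k" "i0 < s" "a < r" "b < r" "a \<noteq> b"
  shows "feasible k s n r (rotate_column_pair U i0 a b t)"
proof (rule feasible_change_block[OF feasible])
  show "rotate_column_pair U i0 a b t i = U i" if "i \<noteq> i0" for i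
    using that by (simp add: rotate_column_pair_def fun_eq_iff)
  have orthonormal: "(\<Sum>p<n i0. U i0 p x * U i0 p y) = (if x = y then 1 else 0)"
    if "x < r" "y < r" for x y
    using that \<open>i0 < s\<close>
    by (intro feasible_orthonormal[OF feasible \<open>i0 < k\<close>]) (auto simp: coupled_columns_def)
  fix a' b' assume "(i0, a', b') \<in> constraints k s r"
  then have "a' < r" "b' < r"
    by (auto simp: constraints_def)
  then show "constraint_fun n (i0, a', b') (rotate_column_pair U i0 a b t) = 0"
    using assms(4-6)
    by (cases "a' = a"; cases "a' = b"; cases "b' = a"; cases "b' = b")
      (simp_all add: constraint_fun_def rotate_column_pair_def sum_linear_combination_mult
        orthonormal sin_cos_squared_add3)
qed

lemma local_maximizer_gradient_orthogonal:
  assumes max: "local_maximizer k s n r A U" and "i0 < k" "a < r"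
    and unit: "(\<Sum>p<n i0. w p * w p) = 1"
    and perp: "\<And>b. b \<in> coupled_columns s r i0 a \<Longrightarrow> (\<Sum>p<n i0. w p * U i0 p b) = 0"
  shows "(\<Sum>p<n i0. partial (objective k n r A) U (i0, p, a) * w p) = 0"
proof -
  let ?G = "\<lambda>p j. partial (objective k n r A) U (i0, p, j)"
  have feasible: "feasible k s n r U"
    using max by (simp add: local_maximizer_def)
  have "(\<Sum>j<r. \<Sum>p<n i0. ?G p j * (if j = a then w p else 0)) = 0"
  proof (rule local_maximizer_block_curve_derivative_zero[OF max \<open>i0 < k\<close>,
        where \<gamma> = "rotate_column U i0 a w"])
    show "feasible k s n r (rotate_column U i0 a w t)" for t
      using feasible \<open>i0 < k\<close> \<open>a < r\<close> unit perp by (rule feasible_rotate_column)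
    show "((\<lambda>t. rotate_column U i0 a w t i0 p j) has_real_derivative (if j = a then w p else 0)) (at 0)"
      for p j
      by (cases "j = a") (auto simp: rotate_column_def intro!: derivative_eq_intros)
  qed (auto simp: rotate_column_def)
  also have "(\<Sum>j<r. \<Sum>p<n i0. ?G p j * (if j = a then w p else 0))
      = (\<Sum>j<r. if j = a then (\<Sum>p<n i0. ?G p j * w p) else 0)"
    by (intro sum.cong) auto
  finally show ?thesis
    using \<open>a < r\<close> by simp
qed

lemma local_maximizer_gradient_symmetric:
  assumes max: "local_maximizer k s n r A U" and "i0 < k" "i0 < s" "a < r" "b < r"
  shows "(\<Sum>p<n i0. partial (objective k n r A) U (i0, p, a) * U i0 p b) =
         (\<Sum>p<n i0. partial (objective k n r A) U (i0, p, b) * U i0 p a)"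
proof (cases "a = b")
  case False
  let ?G = "\<lambda>p j. partial (objective k n r A) U (i0, p, j)"
  let ?d = "\<lambda>p j. if j = a then U i0 p b else if j = b then - U i0 p a else 0"
  have feasible: "feasible k s n r U"
    using max by (simp add: local_maximizer_def)
  have "(\<Sum>j<r. \<Sum>p<n i0. ?G p j * ?d p j) = 0"
  proof (rule local_maximizer_block_curve_derivative_zero[OF max \<open>i0 < k\<close>,
        where \<gamma> = "rotate_column_pair U i0 a b"])
    show "feasible k s n r (rotate_column_pair U i0 a b t)" for t
      using feasible assms(2-5) False by (rule feasible_rotate_column_pair)
    show "((\<lambda>t. rotate_column_pair U i0 a b t i0 p j) has_real_derivative ?d p j) (at 0)" for p j
      using False
      by (cases "j = a"; cases "j = b") (auto simp: rotate_column_pair_def intro!: derivative_eq_intros)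
  qed (auto simp: rotate_column_pair_def)
  also have "(\<Sum>j<r. \<Sum>p<n i0. ?G p j * ?d p j)
      = (\<Sum>j<r. (if j = a then (\<Sum>p<n i0. ?G p j * U i0 p b) else 0)
          - (if j = b then (\<Sum>p<n i0. ?G p j * U i0 p a) else 0))"
    using False by (intro sum.cong) (auto simp: sum_negf)
  finally show ?thesis
    using \<open>a < r\<close> \<open>b < r\<close> by (simp add: sum_subtractf)
qed simp

lemma local_maximizer_gradient_in_span:
  assumes max: "local_maximizer k s n r A U" and "i < k" "j < r" "p < n i"
  shows "partial (objective k n r A) U (i, p, j) =
    (\<Sum>b\<in>coupled_columns s r i j. (\<Sum>q<n i. partial (objective k n r A) U (i, q, j) * U i q b) * U i p b)"
proof -
  have feasible: "feasible k s n r U"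
    using max by (simp add: local_maximizer_def)
  show ?thesis
    using finite_coupled_columns feasible_orthonormal[OF feasible \<open>i < k\<close>]
      local_maximizer_gradient_orthogonal[OF max \<open>i < k\<close> \<open>j < r\<close>] \<open>p < n i\<close>
    by (rule orthonormal_expansion[where u = "\<lambda>b q. U i q b"
          and g = "\<lambda>q. partial (objective k n r A) U (i, q, j)"])
qed

lemma lagrange_multipliers_nonempty:
  assumes max: "local_maximizer k s n r A U"
  shows "lagrange_multipliers k s n r A U \<noteq> {}"
proof -
  define M where "M i a b = (\<Sum>q<n i. partial (objective k n r A) U (i, q, a) * U i q b)" for i a b
  define l where "l = restrict (\<lambda>(i, a, b). if a = b then M i a a / 2 else M i a b) (constraints k s r)"
  have l_matrix: "multiplier_matrix l i j b = M i j b"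
    if "i < k" "j < r" "b \<in> coupled_columns s r i j" for i j b
  proof (cases "b = j")
    case True
    with that show ?thesis
      by (simp add: multiplier_matrix_def l_def constraints_def)
  next
    case False
    with that have "i < s" "b < r"
      by (auto simp: coupled_columns_def)
    with that have "(i, min j b, max j b) \<in> constraints k s r"
      by (simp add: constraints_def)
    moreover have "M i b j = M i j b"
      using local_maximizer_gradient_symmetric[OF max \<open>i < k\<close> \<open>i < s\<close> \<open>b < r\<close> \<open>j < r\<close>]
      by (simp add: M_def)
    ultimately show ?thesis
      using False by (auto simp: multiplier_matrix_def l_def min_def max_def)
  qed
  have "l \<in> lagrange_multipliers k s n r A U"
    unfolding lagrange_multipliers_def
  proof (intro CollectI conjI ballI)
    show "l \<in> constraints k s r \<rightarrow>\<^sub>E UNIV"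
      by (simp add: l_def)
    fix x assume "x \<in> coords k n r"
    then obtain i p j where x: "x = (i, p, j)" "i < k" "p < n i" "j < r"
      by (auto simp: coords_def)
    then show "partial (objective k n r A) U x =
        (\<Sum>c\<in>constraints k s r. l c * partial (constraint_fun n c) U x)"
      by (simp add: constraint_gradient_combination l_matrix local_maximizer_gradient_in_span[OF max] M_def
          coupled_columns_def)
  qed
  then show ?thesis
    by blast
qed

lemma lagrange_multipliers_unique:
  assumes licq: "LICQ k s n r U"
    and l1: "l1 \<in> lagrange_multipliers k s n r A U" and l2: "l2 \<in> lagrange_multipliers k s n r A U"
  shows "l1 = l2"
proof (rule PiE_ext)
  show "l1 \<in> constraints k s r \<rightarrow>\<^sub>E UNIV" "l2 \<in> constraints k s r \<rightarrow>\<^sub>E UNIV"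
    using l1 l2 by (simp_all add: lagrange_multipliers_def)
  have "(\<Sum>c\<in>constraints k s r. (l1 c - l2 c) * partial (constraint_fun n c) U x) = 0"
    if "x \<in> coords k n r" for x
    using l1 l2 that by (simp add: lagrange_multipliers_def left_diff_distrib sum_subtractf)
  then have "\<forall>c\<in>constraints k s r. l1 c - l2 c = 0"
    using licq[unfolded LICQ_def, THEN spec[where x = "\<lambda>c. l1 c - l2 c"]] by simp
  then show "l1 c = l2 c" if "c \<in> constraints k s r" for c
    using that by simp
qed

theorem proposition4p2:
  fixes k s r :: nat and n :: "nat \<Rightarrow> nat" and A :: "(nat \<Rightarrow> nat) \<Rightarrow> real"
  assumes "1 \<le> s" and "s \<le> k" and "\<forall>i<s. r \<le> n i"
  shows "(\<forall>U. feasible k s n r U \<longrightarrow> LICQ k s n r U) \<and>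
         (\<forall>U. local_maximizer k s n r A U \<longrightarrow>
              (\<exists>l. lagrange_multipliers k s n r A U = {l}))"
proof (intro conjI allI impI)
  show "LICQ k s n r U" if "feasible k s n r U" for U
    using that by (rule feasible_imp_LICQ)
  fix U assume max: "local_maximizer k s n r A U"
  then have "LICQ k s n r U"
    by (simp add: local_maximizer_def feasible_imp_LICQ)
  moreover obtain l where "l \<in> lagrange_multipliers k s n r A U"
    using lagrange_multipliers_nonempty[OF max] by blast
  ultimately show "\<exists>l. lagrange_multipliers k s n r A U = {l}"
    using lagrange_multipliers_unique by blast
qed

end
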